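(* Let $4\le k\le\infty$ and let $f\colon A\to B$ be a simplicial map from a flag simplicial complex $A$ onto a flag simplicial complex $B$. Suppose that vertices $a,a'$ of $A$ are adjacent if and only if the vertices $f(a),f(a')$ are adjacent or equal. Then $A$ is $k$-large if and only if $B$ is $k$-large.
   Context: A simplicial complex is flag if every set of pairwise adjacent vertices spans a simplex. A cycle is a subcomplex that is a subdivision of the circle; it is full if every simplex spanned by its vertices lies in it. A flag complex is $k$-large if it has no full cycle of length $<k$. *)

theory Defs
  imports Main "HOL-Library.Extended_Nat"
begin

definition simplicial_complex :: "'a set set \<Rightarrow> bool" where
  "simplicial_complex K \<longleftrightarrow>
     (\<forall>\<sigma>\<in>K. finite \<sigma> \<and> \<sigma> \<noteq> {} \<and> (\<forall>\<tau>. \<tau> \<subseteq> \<sigma> \<and> \<tau> \<noteq> {} \<longrightarrow> \<tau> \<in> K))"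

definition vertices :: "'a set set \<Rightarrow> 'a set" where
  "vertices K = \<Union>K"

definition adjacent :: "'a set set \<Rightarrow> 'a \<Rightarrow> 'a \<Rightarrow> bool" where
  "adjacent K x y \<longleftrightarrow> x \<noteq> y \<and> {x, y} \<in> K"

definition flag :: "'a set set \<Rightarrow> bool" where
  "flag K \<longleftrightarrow> simplicial_complex K \<and>
     (\<forall>S. finite S \<and> S \<noteq> {} \<and> S \<subseteq> vertices K \<and>
          (\<forall>x\<in>S. \<forall>y\<in>S. x \<noteq> y \<longrightarrow> adjacent K x y) \<longrightarrow> S \<in> K)"

definition simplicial_map :: "'a set set \<Rightarrow> 'b set set \<Rightarrow> ('a \<Rightarrow> 'b) \<Rightarrow> bool" where
  "simplicial_map A B f \<longleftrightarrow> (\<forall>\<sigma>\<in>A. f ` \<sigma> \<in> B)"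

definition cycle_subcomplex :: "(nat \<Rightarrow> 'a) \<Rightarrow> nat \<Rightarrow> 'a set set" where
  "cycle_subcomplex c n =
     {{c i} | i. i < n} \<union> {{c i, c ((i + 1) mod n)} | i. i < n}"

definition is_cycle :: "'a set set \<Rightarrow> (nat \<Rightarrow> 'a) \<Rightarrow> nat \<Rightarrow> bool" where
  "is_cycle K c n \<longleftrightarrow> 3 \<le> n \<and> inj_on c {..<n} \<and> cycle_subcomplex c n \<subseteq> K"

definition full_cycle :: "'a set set \<Rightarrow> (nat \<Rightarrow> 'a) \<Rightarrow> nat \<Rightarrow> bool" where
  "full_cycle K c n \<longleftrightarrow> is_cycle K c n \<and>
     (\<forall>\<sigma>\<in>K. \<sigma> \<subseteq> c ` {..<n} \<longrightarrow> \<sigma> \<in> cycle_subcomplex c n)"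

definition k_large :: "'a set set \<Rightarrow> enat \<Rightarrow> bool" where
  "k_large K k \<longleftrightarrow> flag K \<and> \<not> (\<exists>c n. full_cycle K c n \<and> enat n < k)"

end

theory Submission
  imports Defs
begin

text \<open>
  A full cycle in a flag complex has length at least 4, so consecutive vertices of it are
  never identified by f: if f(c i) = f(c (i+1)), then c (i+2), being adjacent to c (i+1), would
  also be adjacent to c i. Hence f maps full cycles of A injectively onto cycles of B, and these
  are again full because, by flagness of A and the adjacency hypothesis, a simplex of B spanned
  by the image cycle pulls back to a simplex of A spanned by the original one. Conversely, any
  choice of preimages of a full cycle of B is a full cycle of A of the same length.
\<close>

definition adjacency_pulled_back :: "'a set set \<Rightarrow> 'b set set \<Rightarrow> ('a \<Rightarrow> 'b) \<Rightarrow> bool" where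
  "adjacency_pulled_back A B f \<longleftrightarrow>
     (\<forall>a\<in>vertices A. \<forall>a'\<in>vertices A. a \<noteq> a' \<longrightarrow>
        (adjacent A a a' \<longleftrightarrow> adjacent B (f a) (f a') \<or> f a = f a'))"

lemma simplicial_complex_face:
  "simplicial_complex K \<Longrightarrow> \<sigma> \<in> K \<Longrightarrow> \<tau> \<subseteq> \<sigma> \<Longrightarrow> \<tau> \<noteq> {} \<Longrightarrow> \<tau> \<in> K"
  unfolding simplicial_complex_def by blast

lemma simplicial_complex_singleton:
  "simplicial_complex K \<Longrightarrow> x \<in> vertices K \<Longrightarrow> {x} \<in> K"
  unfolding vertices_def by (blast intro: simplicial_complex_face)

lemma flag_simplexI:
  assumes "flag K" "finite S" "S \<noteq> {}" "S \<subseteq> vertices K"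
    and "\<And>x y. x \<in> S \<Longrightarrow> y \<in> S \<Longrightarrow> x \<noteq> y \<Longrightarrow> adjacent K x y"
  shows "S \<in> K"
  using assms unfolding flag_def by blast

lemma adjacent_iff_edge: "x \<noteq> y \<Longrightarrow> adjacent K x y \<longleftrightarrow> {x, y} \<in> K"
  unfolding adjacent_def by blast

text \<open>cycle_subcomplex id n is the set of index sets of the faces of an n-cycle.\<close>

lemma cycle_subcomplex_id_subset: "0 < n \<Longrightarrow> J \<in> cycle_subcomplex id n \<Longrightarrow> J \<subseteq> {..<n}"
  unfolding cycle_subcomplex_def by auto

lemma cycle_subcomplex_eq_image: "cycle_subcomplex c n = image c ` cycle_subcomplex id n"
proof -
  have eq: "cycle_subcomplex g n = (\<lambda>i. {g i}) ` {..<n} \<union> (\<lambda>i. {g i, g ((i + 1) mod n)}) ` {..<n}"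
    for g :: "nat \<Rightarrow> 'b"
    unfolding cycle_subcomplex_def by blast
  show ?thesis
    by (simp add: eq image_Un image_image)
qed

lemma doubleton_in_cycle_subcomplex_id:
  "i \<noteq> j \<Longrightarrow> i < n \<Longrightarrow> j < n \<Longrightarrow>
     {i, j} \<in> cycle_subcomplex id n \<longleftrightarrow> j = (i + 1) mod n \<or> i = (j + 1) mod n"
  unfolding cycle_subcomplex_def by (auto simp: doubleton_eq_iff)

lemma image_in_cycle_subcomplex_iff:
  assumes "inj_on c {..<n}" "0 < n" "J \<subseteq> {..<n}"
  shows "c ` J \<in> cycle_subcomplex c n \<longleftrightarrow> J \<in> cycle_subcomplex id n"
proof -
  have "c ` J = c ` J' \<longleftrightarrow> J = J'" if "J' \<in> cycle_subcomplex id n" for J'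
    using inj_on_image_eq_iff[OF assms(1,3) cycle_subcomplex_id_subset[OF assms(2) that]] .
  then show ?thesis
    unfolding cycle_subcomplex_eq_image[of c] by blast
qed

lemma is_cycleD:
  assumes "is_cycle K c n"
  shows "3 \<le> n" "inj_on c {..<n}" "i < n \<Longrightarrow> {c i} \<in> K"
    "i < n \<Longrightarrow> {c i, c ((i + 1) mod n)} \<in> K" "i < n \<Longrightarrow> c i \<in> vertices K"
  using assms unfolding is_cycle_def cycle_subcomplex_def vertices_def by blast+

lemma is_cycleI:
  assumes "3 \<le> n" "inj_on c {..<n}" "\<And>i. i < n \<Longrightarrow> {c i} \<in> K"
    "\<And>i. i < n \<Longrightarrow> {c i, c ((i + 1) mod n)} \<in> K"
  shows "is_cycle K c n"
  using assms unfolding is_cycle_def cycle_subcomplex_def by blast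

lemma full_cycle_iff_indices:
  "full_cycle K c n \<longleftrightarrow>
     is_cycle K c n \<and> (\<forall>J \<subseteq> {..<n}. c ` J \<in> K \<longrightarrow> J \<in> cycle_subcomplex id n)"
proof (cases "is_cycle K c n")
  case True
  then have "inj_on c {..<n}" "0 < n"
    using is_cycleD(1,2) by fastforce+
  then have "c ` J \<in> cycle_subcomplex c n \<longleftrightarrow> J \<in> cycle_subcomplex id n" if "J \<subseteq> {..<n}" for J
    using image_in_cycle_subcomplex_iff that by blast
  with True show ?thesis
    unfolding full_cycle_def subset_image_iff by blast
qed (simp add: full_cycle_def)

lemma full_cycle_imp_is_cycle: "full_cycle K c n \<Longrightarrow> is_cycle K c n"
  unfolding full_cycle_def by blast

lemma full_cycle_indices:
  "full_cycle K c n \<Longrightarrow> J \<subseteq> {..<n} \<Longrightarrow> c ` J \<in> K \<Longrightarrow> J \<in> cycle_subcomplex id n"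
  unfolding full_cycle_iff_indices by blast

lemma adjacent_full_cycle_iff:
  assumes "full_cycle K c n" "i < n" "j < n" "i \<noteq> j"
  shows "adjacent K (c i) (c j) \<longleftrightarrow> j = (i + 1) mod n \<or> i = (j + 1) mod n"
proof -
  have cycle: "is_cycle K c n"
    using full_cycle_imp_is_cycle[OF assms(1)] .
  have "c i \<noteq> c j"
    using is_cycleD(2)[OF cycle] assms(2-4) by (auto dest: inj_onD)
  then have "adjacent K (c i) (c j) \<longleftrightarrow> c ` {i, j} \<in> K"
    by (simp add: adjacent_iff_edge)
  also have "\<dots> \<longleftrightarrow> {i, j} \<in> cycle_subcomplex id n"
  proof
    assume "{i, j} \<in> cycle_subcomplex id n"
    then have "c ` {i, j} \<in> cycle_subcomplex c n"
      unfolding cycle_subcomplex_eq_image[of c] by blast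
    then show "c ` {i, j} \<in> K"
      using cycle unfolding is_cycle_def by blast
  qed (use full_cycle_indices[OF assms(1)] assms(2,3) in auto)
  finally show ?thesis
    using doubleton_in_cycle_subcomplex_id assms(2-4) by blast
qed

lemma flag_full_cycle_length_ge_4:
  assumes "flag K" "full_cycle K c n"
  shows "4 \<le> n"
proof (rule ccontr)
  assume "\<not> 4 \<le> n"
  moreover have cycle: "is_cycle K c n"
    using full_cycle_imp_is_cycle[OF assms(2)] .
  ultimately have n: "n = 3"
    using is_cycleD(1) by fastforce
  \<comment> \<open>in a 3-cycle any two vertices are neighbours, so flagness fills in the triangle\<close>
  have "c ` {..<n} \<in> K"
  proof (rule flag_simplexI[OF assms(1)])
    show "finite (c ` {..<n})"
      by simp
    show "c ` {..<n} \<noteq> {}"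
      using n by (simp add: lessThan_empty_iff)
    show "c ` {..<n} \<subseteq> vertices K"
      using is_cycleD(5)[OF cycle] by blast
    fix x y assume "x \<in> c ` {..<n}" "y \<in> c ` {..<n}" "x \<noteq> y"
    then obtain i j where ij: "i < n" "j < n" "i \<noteq> j" "x = c i" "y = c j"
      by blast
    then have "j = (i + 1) mod n \<or> i = (j + 1) mod n"
      unfolding n by presburger
    then show "adjacent K x y"
      using adjacent_full_cycle_iff[OF assms(2) ij(1-3)] ij(4,5) by simp
  qed
  then have "{..<n} \<in> cycle_subcomplex id n"
    using full_cycle_indices[OF assms(2)] by blast
  then obtain i j where "{..<n} = {i, j}"
    unfolding cycle_subcomplex_def by auto
  then have "n = card {i, j}"
    by (metis card_lessThan)
  also have "\<dots> \<le> 2"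
    by (cases "i = j") simp_all
  finally show False
    using n by simp
qed

lemma mod_less_double: "(x::nat) < 2 * n \<Longrightarrow> x mod n = (if x < n then x else x - n)"
  by (simp add: le_mod_geq)

lemma cyclic_successors_distinct:
  fixes i n :: nat
  assumes "i < n" "4 \<le> n"
  defines "j \<equiv> (i + 1) mod n" and "m \<equiv> ((i + 1) mod n + 1) mod n"
  shows "m \<noteq> i" "m \<noteq> j" "i \<noteq> (m + 1) mod n"
proof -
  have "m = (i + 2) mod n" "(m + 1) mod n = (i + 3) mod n"
    unfolding m_def by (simp_all add: mod_Suc_eq numeral_3_eq_3)
  then show "m \<noteq> i" "m \<noteq> j" "i \<noteq> (m + 1) mod n"
    using assms(1,2) unfolding j_def by (auto simp: mod_less_double)
qed

lemma full_cycle_image_inj: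
  assumes "full_cycle A c n" "4 \<le> n" "adjacency_pulled_back A B f"
  shows "inj_on (f \<circ> c) {..<n}"
proof -
  have cycle: "is_cycle A c n"
    using full_cycle_imp_is_cycle[OF assms(1)] .
  have adjacent_iff: "adjacent A (c i) (c j) \<longleftrightarrow> adjacent B (f (c i)) (f (c j)) \<or> f (c i) = f (c j)"
    if "i < n" "j < n" "i \<noteq> j" for i j
  proof -
    have "c i \<noteq> c j"
      using is_cycleD(2)[OF cycle] that by (auto dest: inj_onD)
    then show ?thesis
      using assms(3) is_cycleD(5)[OF cycle] that unfolding adjacency_pulled_back_def by blast
  qed
  have successor: "f (c i) \<noteq> f (c ((i + 1) mod n))" if "i < n" for i
  proof
    define j where "j = (i + 1) mod n"
    define m where "m = (j + 1) mod n"
    note distinct = cyclic_successors_distinct[OF that assms(2), folded j_def, folded m_def]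
    have "j < n" "m < n"
      using assms(2) by (simp_all add: j_def m_def)
    assume "f (c i) = f (c ((i + 1) mod n))"
    then have "f (c j) = f (c i)"
      by (simp add: j_def)
    moreover have "adjacent A (c m) (c j)"
      using adjacent_full_cycle_iff[OF assms(1) \<open>m < n\<close> \<open>j < n\<close> distinct(2)] m_def by simp
    then have "adjacent B (f (c m)) (f (c j)) \<or> f (c m) = f (c j)"
      using adjacent_iff[OF \<open>m < n\<close> \<open>j < n\<close> distinct(2)] by blast
    ultimately have "adjacent A (c m) (c i)"
      using adjacent_iff[OF \<open>m < n\<close> that distinct(1)] by simp
    then show False
      using adjacent_full_cycle_iff[OF assms(1) \<open>m < n\<close> that distinct(1)] distinct(2,3) j_def by blast
  qed
  show ?thesis
  proof (rule inj_onI, rule ccontr)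
    fix i j assume ij: "i \<in> {..<n}" "j \<in> {..<n}" "(f \<circ> c) i = (f \<circ> c) j" "i \<noteq> j"
    then have "adjacent A (c i) (c j)"
      using adjacent_iff by simp
    then show False
      using adjacent_full_cycle_iff[OF assms(1), of i j] successor[of i] successor[of j] ij by auto
  qed
qed

lemma full_cycle_image:
  assumes "flag A" "simplicial_complex B" "simplicial_map A B f" "adjacency_pulled_back A B f"
    and "full_cycle A c n"
  shows "full_cycle B (f \<circ> c) n"
  unfolding full_cycle_iff_indices
proof (intro conjI allI impI)
  have cycle: "is_cycle A c n"
    using full_cycle_imp_is_cycle[OF assms(5)] .
  have maps: "\<sigma> \<in> A \<Longrightarrow> f ` \<sigma> \<in> B" for \<sigma>
    using assms(3) unfolding simplicial_map_def by blast
  show "is_cycle B (f \<circ> c) n"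
  proof (rule is_cycleI)
    show "inj_on (f \<circ> c) {..<n}"
      using full_cycle_image_inj flag_full_cycle_length_ge_4 assms by blast
  qed (use is_cycleD[OF cycle] maps in \<open>force+\<close>)
  fix J assume J: "J \<subseteq> {..<n}" "(f \<circ> c) ` J \<in> B"
  have "c ` J \<in> A"
  proof (rule flag_simplexI[OF assms(1)])
    show "finite (c ` J)" "c ` J \<subseteq> vertices A"
      using J(1) finite_subset is_cycleD(5)[OF cycle] by blast+
    show "c ` J \<noteq> {}"
      using J(2) assms(2) unfolding simplicial_complex_def by auto
    fix x y assume "x \<in> c ` J" "y \<in> c ` J" "x \<noteq> y"
    moreover have "{f x, f y} \<in> B" if "x \<in> c ` J" "y \<in> c ` J"
      using simplicial_complex_face[OF assms(2) J(2)] that by auto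
    ultimately show "adjacent A x y"
      using assms(4) J(1) is_cycleD(5)[OF cycle]
      unfolding adjacency_pulled_back_def adjacent_def by blast
  qed
  then show "J \<in> cycle_subcomplex id n"
    by (rule full_cycle_indices[OF assms(5) J(1)])
qed

lemma full_cycle_lift:
  assumes "simplicial_complex A" "B = (\<lambda>\<sigma>. f ` \<sigma>) ` A" "adjacency_pulled_back A B f"
    and "full_cycle B c n"
  obtains a where "full_cycle A a n"
proof -
  have cycle: "is_cycle B c n"
    using full_cycle_imp_is_cycle[OF assms(4)] .
  have "\<exists>x \<in> vertices A. f x = c i" if i: "i < n" for i
  proof -
    obtain \<sigma> where "\<sigma> \<in> A" "f ` \<sigma> = {c i}"
      using is_cycleD(3)[OF cycle i] assms(2) by auto
    then show ?thesis
      unfolding vertices_def by blast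
  qed
  then obtain a where a: "\<And>i. i < n \<Longrightarrow> a i \<in> vertices A" "\<And>i. i < n \<Longrightarrow> f (a i) = c i"
    by metis
  have image: "f ` a ` J = c ` J" if "J \<subseteq> {..<n}" for J
    using a(2) that by (force simp: image_image)
  have "full_cycle A a n"
    unfolding full_cycle_iff_indices
  proof (intro conjI allI impI)
    show "is_cycle A a n"
    proof (rule is_cycleI)
      show "3 \<le> n"
        using is_cycleD(1)[OF cycle] .
      show "inj_on a {..<n}"
        using is_cycleD(2)[OF cycle] a(2) by (metis inj_on_def lessThan_iff)
      show "{a i} \<in> A" if "i < n" for i
        using simplicial_complex_singleton[OF assms(1) a(1)[OF that]] .
      show "{a i, a ((i + 1) mod n)} \<in> A" if "i < n" for i
      proof -
        let ?j = "(i + 1) mod n"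
        have "?j < n"
          using that by simp
        have "i \<noteq> ?j"
          using that is_cycleD(1)[OF cycle] by (simp add: mod_if)
        then have "c i \<noteq> c ?j"
          using is_cycleD(2)[OF cycle] that \<open>?j < n\<close> by (auto dest: inj_onD)
        then have "adjacent B (c i) (c ?j)"
          using is_cycleD(4)[OF cycle that] by (simp add: adjacent_iff_edge)
        then have "adjacent A (a i) (a ?j)"
          using assms(3) a[OF that] a[OF \<open>?j < n\<close>]
          unfolding adjacency_pulled_back_def adjacent_def by metis
        then show ?thesis
          unfolding adjacent_def by blast
      qed
    qed
    fix J assume J: "J \<subseteq> {..<n}" "a ` J \<in> A"
    then have "c ` J \<in> B"
      using assms(2) image by (metis image_eqI)
    then show "J \<in> cycle_subcomplex id n"
      by (rule full_cycle_indices[OF assms(4) J(1)])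
  qed
  then show thesis
    by (rule that)
qed

theorem lemma2p5:
  fixes A :: "'a set set" and B :: "'b set set" and f :: "'a \<Rightarrow> 'b" and k :: enat
  assumes "4 \<le> k"
    and "flag A" and "flag B"
    and "simplicial_map A B f"
    and "B = (\<lambda>\<sigma>. f ` \<sigma>) ` A"
    and "\<forall>a\<in>vertices A. \<forall>a'\<in>vertices A. a \<noteq> a' \<longrightarrow>
           (adjacent A a a' \<longleftrightarrow> adjacent B (f a) (f a') \<or> f a = f a')"
  shows "k_large A k \<longleftrightarrow> k_large B k"
proof -
  have pulled_back: "adjacency_pulled_back A B f"
    using assms(6) unfolding adjacency_pulled_back_def .
  have "simplicial_complex A" "simplicial_complex B"
    using assms(2,3) unfolding flag_def by blast+
  then have "(\<exists>c. full_cycle A c n) \<longleftrightarrow> (\<exists>c. full_cycle B c n)" for n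
    using full_cycle_image[OF assms(2) _ assms(4) pulled_back]
      full_cycle_lift[OF _ assms(5) pulled_back] by metis
  then show ?thesis
    unfolding k_large_def using assms(2,3) by blast
qed

end
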